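(* Let $G=(V,E)$ be a finite simple undirected graph, let $0<p\le 1$, let $T\subseteq V$ be a nonempty set maximizing $f_p(S)$ over all $S\subseteq V$, and let $v\in T$ be a vertex with $d_v(T)=\min_{u\in T}d_u(T)$. Then $\Delta_v(T)\le 2\,d_v(T)^p$.
   Context: For $v\in V$, $N(v)=\{u\in V:(u,v)\in E\}$ (so $v\notin N(v)$). For $S\subseteq V$ and $v\in V$, $d_v(S)=|N(v)\cap S|$. For $p>0$ and nonempty $S\subseteq V$, $f_p(S)=\frac{1}{|S|}\sum_{v\in S}d_v(S)^p$ (with the convention $0^p=0$), and $f_p(\emptyset)=0$. For $S\subseteq V$ and $v\in S$, $\Delta_v(S)=d_v(S)^p+\sum_{u\in N(v)\cap S}\big(d_u(S)^p-(d_u(S)-1)^p\big)$. *)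

theory Defs
  imports Complex_Main
begin

definition simple_graph :: "'a set \<Rightarrow> ('a \<times> 'a) set \<Rightarrow> bool" where
  "simple_graph V E \<longleftrightarrow> finite V \<and> E \<subseteq> V \<times> V \<and> (\<forall>u v. (u, v) \<in> E \<longrightarrow> (v, u) \<in> E)
     \<and> (\<forall>v. (v, v) \<notin> E)"

definition nbhd :: "'a set \<Rightarrow> ('a \<times> 'a) set \<Rightarrow> 'a \<Rightarrow> 'a set" where
  "nbhd V E v = {u \<in> V. (u, v) \<in> E}"

definition deg_in :: "'a set \<Rightarrow> ('a \<times> 'a) set \<Rightarrow> 'a set \<Rightarrow> 'a \<Rightarrow> nat" where
  "deg_in V E S v = card (nbhd V E v \<inter> S)"

text \<open>f_p(S); powr satisfies 0 powr p = 0, matching the convention 0^p = 0.\<close>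
definition fp :: "'a set \<Rightarrow> ('a \<times> 'a) set \<Rightarrow> real \<Rightarrow> 'a set \<Rightarrow> real" where
  "fp V E p S = (if S = {} then 0
     else (\<Sum>v\<in>S. real (deg_in V E S v) powr p) / real (card S))"

definition Delta :: "'a set \<Rightarrow> ('a \<times> 'a) set \<Rightarrow> real \<Rightarrow> 'a set \<Rightarrow> 'a \<Rightarrow> real" where
  "Delta V E p S v = real (deg_in V E S v) powr p
     + (\<Sum>u\<in>nbhd V E v \<inter> S. real (deg_in V E S u) powr p - (real (deg_in V E S u) - 1) powr p)"

end

theory Submission
  imports Defs
begin

text \<open>Each summand d_u^p - (d_u - 1)^p of Delta is a unit increment of the concave map
  t \<mapsto> t^p, hence at most d_u^(p-1) \<le> d^(p-1), where d = d_v(T) is the minimal degree.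
  Summing over the d neighbours of v in T gives at most d \<cdot> d^(p-1) = d^p. Only the
  minimality of d_v(T) is used.\<close>

lemma powr_diff_pred_le:
  fixes x p :: real
  assumes "1 \<le> x" "0 \<le> p" "p \<le> 1"
  shows "x powr p - (x - 1) powr p \<le> x powr (p - 1)"
proof -
  have x_pos: "x > 0" using assms by simp
  have "((x - 1) / x) powr 1 \<le> ((x - 1) / x) powr p"
    by (rule powr_mono') (use assms x_pos in auto)
  then have "(x - 1) / x \<le> ((x - 1) / x) powr p"
    using assms by simp
  also have "\<dots> = (x - 1) powr p / x powr p"
    by (rule powr_divide)
  finally have "x powr p * ((x - 1) / x) \<le> (x - 1) powr p"
    using x_pos by (simp add: field_simps)
  moreover have "x powr p * ((x - 1) / x) = x powr p - x powr (p - 1)"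
    using x_pos by (simp add: powr_diff field_simps)
  ultimately show ?thesis by simp
qed

lemma powr_diff_pred_le_antimono:
  fixes x d p :: real
  assumes "1 \<le> d" "d \<le> x" "0 \<le> p" "p \<le> 1"
  shows "x powr p - (x - 1) powr p \<le> d powr (p - 1)"
proof -
  have "x powr (p - 1) \<le> d powr (p - 1)"
    by (rule powr_mono2') (use assms in auto)
  then show ?thesis
    using powr_diff_pred_le[of x p] assms by simp
qed

lemma sum_powr_diff_pred_le:
  fixes f :: "'b \<Rightarrow> nat" and p :: real
  assumes "finite N" "0 \<le> p" "p \<le> 1" "\<And>u. u \<in> N \<Longrightarrow> card N \<le> f u"
  shows "(\<Sum>u\<in>N. real (f u) powr p - (real (f u) - 1) powr p) \<le> real (card N) powr p"
proof (cases "N = {}")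
  case False
  define d where "d = real (card N)"
  have d_ge_1: "1 \<le> d" using False assms(1) card_gt_0_iff[of N] by (simp add: d_def)
  have "(\<Sum>u\<in>N. real (f u) powr p - (real (f u) - 1) powr p) \<le> (\<Sum>u\<in>N. d powr (p - 1))"
    using powr_diff_pred_le_antimono[OF d_ge_1 _ assms(2,3)] assms(4)
    by (intro sum_mono) (simp add: d_def)
  also have "\<dots> = d * d powr (p - 1)" by (simp add: d_def)
  also have "\<dots> = d powr p" using d_ge_1 by (simp add: powr_diff field_simps)
  finally show ?thesis by (simp add: d_def)
qed simp

theorem lemma3:
  fixes V :: "'a set" and E :: "('a \<times> 'a) set" and p :: real and T :: "'a set" and v :: 'a
  assumes "simple_graph V E"
    and "0 < p" and "p \<le> 1"
    and "T \<subseteq> V" and "T \<noteq> {}"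
    and "\<forall>S. S \<subseteq> V \<longrightarrow> fp V E p S \<le> fp V E p T"
    and "v \<in> T"
    and "\<forall>u\<in>T. deg_in V E T v \<le> deg_in V E T u"
  shows "Delta V E p T v \<le> 2 * real (deg_in V E T v) powr p"
proof -
  define N where "N = nbhd V E v \<inter> T"
  have "finite N"
    using assms(1) by (simp add: N_def nbhd_def simple_graph_def)
  moreover have "deg_in V E T v = card N"
    by (simp add: N_def deg_in_def)
  ultimately have "(\<Sum>u\<in>N. real (deg_in V E T u) powr p - (real (deg_in V E T u) - 1) powr p)
      \<le> real (deg_in V E T v) powr p"
    using sum_powr_diff_pred_le[of N p "deg_in V E T"] assms(2,3,8)
    by (simp add: N_def)
  then show ?thesis by (simp add: Delta_def N_def)
qed

end
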